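(* Let $t\ge 2$, let $n_1,\dots,n_t$ be positive integers, and let $G=K_{n_1,\dots,n_t}$ be the complete $t$-partite graph with partite sets $V_1,\dots,V_t$, $|V_i|=n_i$. Let $N_t=\{1,\dots,t\}$ and $f(I)=\sum_{i\in I}n_i$ for $I\subseteq N_t$. Let $p$ be a positive integer with $f(N_t)>p$. Then for every optimal $\gamma_p(G)$-set $D$ and all $i,j\in N_t\setminus I_D$, we have $\big||D_i|-|D_j|\big|\le 1$.
   Context: A set $S\subseteq V(G)$ is a $p$-dominating set of $G$ if every vertex $v\in V(G)\setminus S$ has at least $p$ neighbors in $S$. The $p$-domination number $\gamma_p(G)$ is the minimum cardinality of a $p$-dominating set of $G$, and a $\gamma_p(G)$-set is a $p$-dominating set of cardinality $\gamma_p(G)$. For $D\subseteq V(G)$ write $D_i=V_i\cap D$ for $i\in N_t$ and $I_D=\{i\in N_t: |D_i|=|V_i|\}$. For a $\gamma_p(G)$-set $D$ with $|I_D|<t$ define $$\mu(D)=\sum_{i\in N_t\setminus I_D}\left|\,|D_i|-\frac{|D|-f(I_D)}{t-|I_D|}\right|.$$ A $\gamma_p(G)$-set $D$ is optimal if: (1) $f(I_D)<p$; (2) $|I_D|\ge |I_S|$ for every $\gamma_p(G)$-set $S$; (3) $\mu(D)\le\mu(S)$ for every $\gamma_p(G)$-set $S$ with $I_S=I_D$. *)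

theory Defs
  imports Complex_Main
begin

definition p_dominating :: "'v set \<Rightarrow> ('v \<Rightarrow> 'v \<Rightarrow> bool) \<Rightarrow> nat \<Rightarrow> 'v set \<Rightarrow> bool" where
  "p_dominating V E p S \<longleftrightarrow> S \<subseteq> V \<and>
     (\<forall>v \<in> V - S. card {u \<in> S. E v u} \<ge> p)"

definition gamma_p :: "'v set \<Rightarrow> ('v \<Rightarrow> 'v \<Rightarrow> bool) \<Rightarrow> nat \<Rightarrow> nat" where
  "gamma_p V E p = Min {card S | S. p_dominating V E p S}"

definition gamma_p_set :: "'v set \<Rightarrow> ('v \<Rightarrow> 'v \<Rightarrow> bool) \<Rightarrow> nat \<Rightarrow> 'v set \<Rightarrow> bool" where
  "gamma_p_set V E p S \<longleftrightarrow> p_dominating V E p S \<and> card S = gamma_p V E p"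

text \<open>Vertices are pairs (i,k) with i in {1..t} and k < n i; the partite set V_i
  consists of the vertices with first component i; two vertices are adjacent
  iff they lie in different partite sets.\<close>

definition mp_verts :: "nat \<Rightarrow> (nat \<Rightarrow> nat) \<Rightarrow> (nat \<times> nat) set" where
  "mp_verts t n = {(i, k). i \<in> {1..t} \<and> k < n i}"

definition mp_part :: "(nat \<Rightarrow> nat) \<Rightarrow> nat \<Rightarrow> (nat \<times> nat) set" where
  "mp_part n i = {(i, k) | k. k < n i}"

definition mp_adj :: "nat \<times> nat \<Rightarrow> nat \<times> nat \<Rightarrow> bool" where
  "mp_adj u v \<longleftrightarrow> fst u \<noteq> fst v"

definition fI :: "(nat \<Rightarrow> nat) \<Rightarrow> nat set \<Rightarrow> nat" where
  "fI n I = (\<Sum>i\<in>I. n i)"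

definition Dpart :: "(nat \<Rightarrow> nat) \<Rightarrow> (nat \<times> nat) set \<Rightarrow> nat \<Rightarrow> (nat \<times> nat) set" where
  "Dpart n D i = mp_part n i \<inter> D"

definition I_set :: "nat \<Rightarrow> (nat \<Rightarrow> nat) \<Rightarrow> (nat \<times> nat) set \<Rightarrow> nat set" where
  "I_set t n D = {i \<in> {1..t}. card (Dpart n D i) = card (mp_part n i)}"

definition mu :: "nat \<Rightarrow> (nat \<Rightarrow> nat) \<Rightarrow> (nat \<times> nat) set \<Rightarrow> real" where
  "mu t n D = (\<Sum>i \<in> {1..t} - I_set t n D.
      \<bar>real (card (Dpart n D i)) -
        (real (card D) - real (fI n (I_set t n D))) / (real t - real (card (I_set t n D)))\<bar>)"

definition optimal :: "nat \<Rightarrow> (nat \<Rightarrow> nat) \<Rightarrow> nat \<Rightarrow> (nat \<times> nat) set \<Rightarrow> bool" where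
  "optimal t n p D \<longleftrightarrow>
     gamma_p_set (mp_verts t n) mp_adj p D \<and>
     card (I_set t n D) < t \<and>
     fI n (I_set t n D) < p \<and>
     (\<forall>S. gamma_p_set (mp_verts t n) mp_adj p S \<longrightarrow> card (I_set t n S) \<le> card (I_set t n D)) \<and>
     (\<forall>S. gamma_p_set (mp_verts t n) mp_adj p S \<and> I_set t n S = I_set t n D \<longrightarrow>
          mu t n D \<le> mu t n S)"

end

theory Submission imports Defs begin

text \<open>If the sizes \<open>|D_i|\<close> for two partite sets outside \<open>I_D\<close> differed by at least two, move one
  vertex of \<open>D\<close> from the largest such \<open>D_M\<close> to an unused vertex of the smallest \<open>D_m\<close>. In a
  complete multipartite graph a vertex of \<open>V_k - S\<close> has exactly \<open>|S| - |S_k|\<close> neighbours in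
  \<open>S\<close>, so the new set is again a \<open>\<gamma>\<^sub>p\<close>-set. Either \<open>V_m\<close> becomes full, enlarging \<open>I\<close>, or
  \<open>I\<close> is unchanged and, since the mean lies strictly between \<open>|D_m|\<close> and \<open>|D_M|\<close>, \<open>\<mu>\<close>
  strictly decreases; both contradict optimality.\<close>

lemma mp_part_iff: "u \<in> mp_part n k \<longleftrightarrow> fst u = k \<and> snd u < n k"
  by (cases u) (auto simp: mp_part_def)

lemma mp_verts_iff: "u \<in> mp_verts t n \<longleftrightarrow> fst u \<in> {1..t} \<and> snd u < n (fst u)"
  by (cases u) (auto simp: mp_verts_def)

lemma finite_mp_part: "finite (mp_part n k)"
  and card_mp_part: "card (mp_part n k) = n k"
proof -
  have "mp_part n k = Pair k ` {..<n k}" by (auto simp: mp_part_def)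
  then show "finite (mp_part n k)" "card (mp_part n k) = n k"
    by (simp_all add: card_image inj_on_def)
qed

lemma finite_mp_verts: "finite (mp_verts t n)"
proof -
  have "mp_verts t n = (\<Union>k\<in>{1..t}. mp_part n k)"
    by (auto simp: mp_verts_iff mp_part_iff)
  then show ?thesis by (simp add: finite_mp_part)
qed

lemma Dpart_iff: "u \<in> Dpart n S k \<longleftrightarrow> u \<in> S \<and> fst u = k \<and> snd u < n k"
  by (auto simp: Dpart_def mp_part_iff)

lemma finite_Dpart: "finite (Dpart n S k)"
  by (simp add: Dpart_def finite_mp_part)

lemma card_Dpart_le: "card (Dpart n S k) \<le> n k"
  by (metis Dpart_def card_mono card_mp_part finite_mp_part inf_le1)

lemma card_Dpart_less_iff: "card (Dpart n S k) < n k \<longleftrightarrow> (\<exists>v \<in> mp_part n k. v \<notin> S)"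
proof -
  have "Dpart n S k \<subseteq> mp_part n k" by (simp add: Dpart_def)
  then have "card (Dpart n S k) = n k \<longleftrightarrow> Dpart n S k = mp_part n k"
    using card_subset_eq[OF finite_mp_part] card_mp_part by metis
  then show ?thesis using card_Dpart_le[of n S k] by (auto simp: Dpart_def)
qed

lemma card_mp_neighbours:
  assumes "S \<subseteq> mp_verts t n"
  shows "card {u \<in> S. mp_adj v u} = card S - card (Dpart n S (fst v))"
proof -
  have "{u \<in> S. mp_adj v u} = S - Dpart n S (fst v)"
    using assms by (auto simp: mp_adj_def Dpart_iff mp_verts_iff)
  moreover have "Dpart n S (fst v) \<subseteq> S" by (auto simp: Dpart_iff)
  ultimately show ?thesis
    using finite_subset[OF assms finite_mp_verts] by (simp add: card_Diff_subset finite_Dpart)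
qed

lemma card_eq_sum_card_Dpart:
  assumes "S \<subseteq> mp_verts t n"
  shows "card S = (\<Sum>k\<in>{1..t}. card (Dpart n S k))"
proof -
  have "S = (\<Union>k\<in>{1..t}. Dpart n S k)"
    using assms by (auto simp: Dpart_iff mp_verts_iff)
  also have "card \<dots> = (\<Sum>k\<in>{1..t}. card (Dpart n S k))"
    by (rule card_UN_disjoint) (auto simp: finite_Dpart Dpart_iff)
  finally show ?thesis .
qed

lemma p_dominating_mp_iff:
  assumes "S \<subseteq> mp_verts t n"
  shows "p_dominating (mp_verts t n) mp_adj p S \<longleftrightarrow>
    (\<forall>k\<in>{1..t}. card (Dpart n S k) < n k \<longrightarrow> p \<le> card S - card (Dpart n S k))"
proof -
  have "(\<forall>v \<in> mp_verts t n - S. p \<le> card S - card (Dpart n S (fst v))) \<longleftrightarrow>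
    (\<forall>k\<in>{1..t}. (\<exists>v \<in> mp_part n k. v \<notin> S) \<longrightarrow> p \<le> card S - card (Dpart n S k))"
  proof (intro iffI ballI impI)
    fix k assume "\<forall>v \<in> mp_verts t n - S. p \<le> card S - card (Dpart n S (fst v))"
      and "k \<in> {1..t}" and "\<exists>v \<in> mp_part n k. v \<notin> S"
    then show "p \<le> card S - card (Dpart n S k)"
      by (force simp: mp_part_iff mp_verts_iff)
  next
    fix v assume "\<forall>k\<in>{1..t}. (\<exists>v \<in> mp_part n k. v \<notin> S) \<longrightarrow> p \<le> card S - card (Dpart n S k)"
      and "v \<in> mp_verts t n - S"
    then show "p \<le> card S - card (Dpart n S (fst v))"
      by (metis DiffD1 DiffD2 mp_part_iff mp_verts_iff)
  qed
  then show ?thesis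
    using assms by (simp add: p_dominating_def card_mp_neighbours card_Dpart_less_iff)
qed

lemma card_move:
  assumes "finite D" "x \<in> D" "y \<notin> D"
  shows "card (insert y (D - {x})) = card D"
proof -
  have "card D > 0" using assms card_gt_0_iff by blast
  then show ?thesis using assms by simp
qed

lemma card_Dpart_move:
  assumes "x \<in> Dpart n D i" "y \<in> mp_part n j" "y \<notin> D" "i \<noteq> j"
  shows "card (Dpart n (insert y (D - {x})) k) =
    (if k = i then card (Dpart n D i) - 1
     else if k = j then Suc (card (Dpart n D j)) else card (Dpart n D k))"
proof -
  have "Dpart n (insert y (D - {x})) k =
    (if k = i then Dpart n D i - {x} else if k = j then insert y (Dpart n D j) else Dpart n D k)"
    using assms by (auto simp: Dpart_iff mp_part_iff)
  then show ?thesis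
    using assms by (simp add: finite_Dpart Dpart_iff)
qed

lemma p_dominating_move:
  assumes dom: "p_dominating (mp_verts t n) mp_adj p D"
    and x: "x \<in> Dpart n D i" and y: "y \<in> mp_part n j" "y \<notin> D" and j: "j \<in> {1..t}"
    and i_not_full: "card (Dpart n D i) < n i"
    and gap: "card (Dpart n D j) + 2 \<le> card (Dpart n D i)"
  shows "p_dominating (mp_verts t n) mp_adj p (insert y (D - {x}))"
proof -
  let ?S = "insert y (D - {x})"
  have DV: "D \<subseteq> mp_verts t n" using dom by (simp add: p_dominating_def)
  have SV: "?S \<subseteq> mp_verts t n" using DV y j by (auto simp: mp_verts_iff mp_part_iff)
  have i: "i \<in> {1..t}" using x DV by (auto simp: Dpart_iff mp_verts_iff)
  have card_S: "card ?S = card D"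
    using x by (intro card_move finite_subset[OF DV finite_mp_verts] y(2)) (simp add: Dpart_iff)
  have "i \<noteq> j" using gap by auto
  note card_part_S = card_Dpart_move[OF x y this]
  have D_crit: "\<forall>k\<in>{1..t}. card (Dpart n D k) < n k \<longrightarrow> p \<le> card D - card (Dpart n D k)"
    using dom DV by (simp add: p_dominating_mp_iff)
  then have p_le: "p \<le> card D - card (Dpart n D i)" using i i_not_full by blast
  show ?thesis
    unfolding p_dominating_mp_iff[OF SV]
  proof (intro ballI impI)
    fix k assume k: "k \<in> {1..t}" "card (Dpart n ?S k) < n k"
    consider "k = i" | "k = j" | "k \<noteq> i" "k \<noteq> j" by blast
    then show "p \<le> card ?S - card (Dpart n ?S k)"
    proof cases
      case 3
      then show ?thesis using D_crit k card_S card_part_S by auto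
    qed (use p_le gap card_S card_part_S \<open>i \<noteq> j\<close> in auto)
  qed
qed

lemma gamma_p_set_move:
  assumes "gamma_p_set (mp_verts t n) mp_adj p D"
    and "x \<in> Dpart n D i" "y \<in> mp_part n j" "y \<notin> D" "j \<in> {1..t}"
    and "card (Dpart n D i) < n i" "card (Dpart n D j) + 2 \<le> card (Dpart n D i)"
  shows "gamma_p_set (mp_verts t n) mp_adj p (insert y (D - {x}))"
proof -
  have "finite D"
    using assms(1) finite_subset[OF _ finite_mp_verts]
    by (auto simp: gamma_p_set_def p_dominating_def)
  then have "card (insert y (D - {x})) = card D"
    using assms(2) Dpart_iff card_move assms(4) by metis
  then show ?thesis
    using assms p_dominating_move[of t n p D x i y j] by (simp add: gamma_p_set_def)
qed

lemma I_set_move: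
  assumes x: "x \<in> Dpart n D i" and y: "y \<in> mp_part n j" "y \<notin> D" and "i \<noteq> j"
    and i_not_full: "card (Dpart n D i) < n i"
  shows "I_set t n (insert y (D - {x})) =
    (if Suc (card (Dpart n D j)) = n j \<and> j \<in> {1..t} then insert j (I_set t n D) else I_set t n D)"
proof -
  have "card (Dpart n D j) < n j" using y card_Dpart_less_iff by blast
  then show ?thesis
    using card_Dpart_move[OF x y \<open>i \<noteq> j\<close>] i_not_full \<open>i \<noteq> j\<close>
    by (auto simp: I_set_def card_mp_part split: if_splits)
qed

lemma sum_abs_dev_move_less:
  fixes f g :: "'a \<Rightarrow> real"
  assumes J: "finite J" "i \<in> J" "j \<in> J" "i \<noteq> j"
    and g: "g i = f i - 1" "g j = f j + 1" "\<And>k. k \<in> J \<Longrightarrow> k \<noteq> i \<Longrightarrow> k \<noteq> j \<Longrightarrow> g k = f k"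
    and f: "f j < a" "a < f i" "f j + 2 \<le> f i"
  shows "(\<Sum>k\<in>J. \<bar>g k - a\<bar>) < (\<Sum>k\<in>J. \<bar>f k - a\<bar>)"
proof -
  have split: "(\<Sum>k\<in>J. h k) = h i + h j + (\<Sum>k\<in>J - {i} - {j}. h k)" for h :: "'a \<Rightarrow> real"
    using J by (simp add: sum.remove)
  have "(\<Sum>k\<in>J - {i} - {j}. \<bar>g k - a\<bar>) = (\<Sum>k\<in>J - {i} - {j}. \<bar>f k - a\<bar>)"
    using g(3) by (intro sum.cong) auto
  moreover have "\<bar>g i - a\<bar> + \<bar>g j - a\<bar> < \<bar>f i - a\<bar> + \<bar>f j - a\<bar>"
    using g(1,2) f by (auto simp: abs_if)
  ultimately show ?thesis
    using split[of "\<lambda>k. \<bar>g k - a\<bar>"] split[of "\<lambda>k. \<bar>f k - a\<bar>"] by linarith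
qed

lemma mean_strictly_between_extremes:
  fixes f :: "'a \<Rightarrow> real" and a :: real
  assumes J: "finite J" "m \<in> J" "M \<in> J"
    and extreme: "\<And>k. k \<in> J \<Longrightarrow> f m \<le> f k \<and> f k \<le> f M" and "f m < f M"
    and mean: "(\<Sum>k\<in>J. f k) = a * card J"
  shows "f m < a" "a < f M"
proof -
  have sum_a: "(\<Sum>k\<in>J. a) = (\<Sum>k\<in>J. f k)" using mean by simp
  show "f m < a"
  proof (rule ccontr)
    assume "\<not> f m < a"
    then have "(\<Sum>k\<in>J. a) < (\<Sum>k\<in>J. f k)"
      using J extreme \<open>f m < f M\<close> by (intro sum_strict_mono_ex1) force+
    then show False using sum_a by simp
  qed
  show "a < f M"
  proof (rule ccontr)
    assume "\<not> a < f M"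
    then have "(\<Sum>k\<in>J. f k) < (\<Sum>k\<in>J. a)"
      using J extreme \<open>f m < f M\<close> by (intro sum_strict_mono_ex1) force+
    then show False using sum_a by simp
  qed
qed

definition mu_mean :: "nat \<Rightarrow> (nat \<Rightarrow> nat) \<Rightarrow> (nat \<times> nat) set \<Rightarrow> real" where
  "mu_mean t n D =
    (real (card D) - real (fI n (I_set t n D))) / (real t - real (card (I_set t n D)))"

lemma mu_eq_sum_abs_dev:
  "mu t n D = (\<Sum>k\<in>{1..t} - I_set t n D. \<bar>real (card (Dpart n D k)) - mu_mean t n D\<bar>)"
  by (simp add: mu_def mu_mean_def)

lemma sum_card_Dpart_eq_mu_mean:
  assumes DV: "D \<subseteq> mp_verts t n" and "card (I_set t n D) < t"
  shows "(\<Sum>k\<in>{1..t} - I_set t n D. real (card (Dpart n D k))) =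
    mu_mean t n D * card ({1..t} - I_set t n D)"
proof -
  let ?I = "I_set t n D"
  have I: "?I \<subseteq> {1..t}" by (auto simp: I_set_def)
  have card_J: "real (card ({1..t} - ?I)) = real t - real (card ?I)"
    using I assms(2) by (simp add: card_Diff_subset finite_subset of_nat_diff)
  have "card D = (\<Sum>k\<in>{1..t}. card (Dpart n D k))"
    using card_eq_sum_card_Dpart[OF DV] .
  also have "\<dots> = (\<Sum>k\<in>?I. card (Dpart n D k)) + (\<Sum>k\<in>{1..t} - ?I. card (Dpart n D k))"
    using sum.subset_diff[OF I, of "\<lambda>k. card (Dpart n D k)"] by (simp add: add.commute)
  also have "(\<Sum>k\<in>?I. card (Dpart n D k)) = fI n ?I"
    unfolding fI_def by (rule sum.cong) (auto simp: I_set_def card_mp_part)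
  finally have "real (card D) - real (fI n ?I) = (\<Sum>k\<in>{1..t} - ?I. real (card (Dpart n D k)))"
    by simp
  moreover have "real t - real (card ?I) > 0" using assms(2) by simp
  ultimately show ?thesis
    unfolding mu_mean_def card_J by simp
qed

lemma mu_move_less:
  assumes "finite D"
    and x: "x \<in> Dpart n D i" and y: "y \<in> mp_part n j" "y \<notin> D"
    and ij: "i \<in> {1..t} - I_set t n D" "j \<in> {1..t} - I_set t n D"
    and same_I: "I_set t n (insert y (D - {x})) = I_set t n D"
    and gap: "card (Dpart n D j) + 2 \<le> card (Dpart n D i)"
    and between: "card (Dpart n D j) < mu_mean t n D" "mu_mean t n D < card (Dpart n D i)"
  shows "mu t n (insert y (D - {x})) < mu t n D"
proof -
  let ?S = "insert y (D - {x})"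
  have "i \<noteq> j" using gap by auto
  have "card ?S = card D"
    using x y(2) \<open>finite D\<close> card_move Dpart_iff by metis
  then have same_mean: "mu_mean t n ?S = mu_mean t n D" by (simp add: mu_mean_def same_I)
  show ?thesis
    unfolding mu_eq_sum_abs_dev same_I same_mean
    using card_Dpart_move[OF x y \<open>i \<noteq> j\<close>] ij \<open>i \<noteq> j\<close> gap between
    by (intro sum_abs_dev_move_less) (auto simp: of_nat_diff)
qed

lemma optimal_extremes_balanced:
  assumes opt: "optimal t n p D"
    and i: "i \<in> {1..t} - I_set t n D" and j: "j \<in> {1..t} - I_set t n D"
    and between: "card (Dpart n D j) < mu_mean t n D" "mu_mean t n D < card (Dpart n D i)"
  shows "card (Dpart n D i) < card (Dpart n D j) + 2"
proof (rule ccontr)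
  assume "\<not> ?thesis"
  then have gap: "card (Dpart n D j) + 2 \<le> card (Dpart n D i)" by simp
  have gD: "gamma_p_set (mp_verts t n) mp_adj p D"
    and max_I: "\<And>S. gamma_p_set (mp_verts t n) mp_adj p S \<Longrightarrow> card (I_set t n S) \<le> card (I_set t n D)"
    and min_mu: "\<And>S. gamma_p_set (mp_verts t n) mp_adj p S \<Longrightarrow> I_set t n S = I_set t n D \<Longrightarrow>
      mu t n D \<le> mu t n S"
    using opt by (auto simp: optimal_def)
  have "finite D"
    using gD finite_subset[OF _ finite_mp_verts] by (auto simp: gamma_p_set_def p_dominating_def)
  have "i \<noteq> j" using gap by auto
  have not_full: "card (Dpart n D k) < n k" if "k \<in> {1..t} - I_set t n D" for k
    using that card_Dpart_le[of n D k] by (auto simp: I_set_def card_mp_part)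
  obtain x where x: "x \<in> Dpart n D i"
    using gap card_gt_0_iff[of "Dpart n D i"] by fastforce
  obtain y where y: "y \<in> mp_part n j" "y \<notin> D"
    using not_full[OF j] card_Dpart_less_iff by blast
  let ?S = "insert y (D - {x})"
  have gS: "gamma_p_set (mp_verts t n) mp_adj p ?S"
    using gamma_p_set_move[OF gD x y] j not_full[OF i] gap by blast
  note I_S = I_set_move[OF x y \<open>i \<noteq> j\<close> not_full[OF i], of t]
  show False
  proof (cases "Suc (card (Dpart n D j)) = n j")
    case True
    then have "card (I_set t n ?S) = Suc (card (I_set t n D))"
      using I_S j by (simp add: I_set_def)
    then show False using max_I[OF gS] by simp
  next
    case False
    then have "I_set t n ?S = I_set t n D" using I_S by simp
    then show False
      using mu_move_less[OF \<open>finite D\<close> x y i j _ gap between] min_mu[OF gS] by fastforce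
  qed
qed

theorem lemma4:
  fixes t p :: nat and n :: "nat \<Rightarrow> nat" and D :: "(nat \<times> nat) set"
  assumes "t \<ge> 2"
    and "\<forall>i \<in> {1..t}. n i > 0"
    and "p > 0"
    and "fI n {1..t} > p"
    and "optimal t n p D"
    and "i \<in> {1..t} - I_set t n D"
    and "j \<in> {1..t} - I_set t n D"
  shows "\<bar>int (card (Dpart n D i)) - int (card (Dpart n D j))\<bar> \<le> 1"
proof (rule ccontr)
  assume unbalanced: "\<not> ?thesis"
  define J where "J = {1..t} - I_set t n D"
  define d where "d k = card (Dpart n D k)" for k
  have "finite J" "J \<noteq> {}" using assms(7) by (auto simp: J_def)
  obtain m where m: "m \<in> J" "d m = Min (d ` J)"
  proof -
    have "Min (d ` J) \<in> d ` J" using \<open>finite J\<close> \<open>J \<noteq> {}\<close> by (intro Min_in) auto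
    then show ?thesis using that by auto
  qed
  obtain M where M: "M \<in> J" "d M = Max (d ` J)"
  proof -
    have "Max (d ` J) \<in> d ` J" using \<open>finite J\<close> \<open>J \<noteq> {}\<close> by (intro Max_in) auto
    then show ?thesis using that by auto
  qed
  have extreme: "d m \<le> d k \<and> d k \<le> d M" if "k \<in> J" for k
    using that m M \<open>finite J\<close> by simp
  have gap: "d m + 2 \<le> d M"
    using unbalanced extreme[of i] extreme[of j] assms(6,7) by (auto simp: J_def d_def)
  have "D \<subseteq> mp_verts t n" "card (I_set t n D) < t"
    using assms(5) by (auto simp: optimal_def gamma_p_set_def p_dominating_def)
  from sum_card_Dpart_eq_mu_mean[OF this]
  have "real (d m) < mu_mean t n D" "mu_mean t n D < real (d M)"
    using mean_strictly_between_extremes[OF \<open>finite J\<close> m(1) M(1), of "\<lambda>k. real (d k)"]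
      extreme gap by (auto simp: J_def d_def)
  then have "d M < d m + 2"
    using optimal_extremes_balanced[OF assms(5), of M m] M(1) m(1) unfolding J_def d_def by blast
  then show False using gap by simp
qed

end
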